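(* Let $(V,m)$ be a discrete measure space, $(b,c)$ a graph over $(V,m)$, and let $Q$ with domain $D$ satisfy condition (C) with respect to $(b,c)$ (so $D\subseteq\widetilde F$). Then for $u\in D$ the following are equivalent: (i) $(\widetilde L+1)u=0$; (ii) $u$ is orthogonal to $D(Q^{(D)})$ with respect to $\langle\cdot,\cdot\rangle_Q$. Consequently, the Hilbert space $(D,\langle\cdot,\cdot\rangle_Q)$ is the orthogonal sum $D=D(Q^{(D)})\oplus\mathcal H^{(Q)}$, where $\mathcal H^{(Q)}=\{u\in D:(\widetilde L+1)u=0\}$.
   Context: $V$ is a finite or countably infinite set and $m:V\to(0,\infty)$; $(V,m)$ is a discrete measure space. $C(V)$ is the set of all functions $V\to\mathbb C$, $C_c(V)$ the finitely supported ones, and $\ell^2(V,m)$ carries $\langle u,v\rangle=\sum_x u(x)\overline{v(x)}m(x)$. A graph over $(V,m)$ is a pair $(b,c)$ with $c:V\to[0,\infty)$, $b:V\times V\to[0,\infty)$, $b(x,x)=0$, $b(x,y)=b(y,x)$, $\sum_y b(x,y)<\infty$. Let $\widetilde F=\{u\in C(V):\sum_y|b(x,y)u(y)|<\infty\ \forall x\}$ and $\widetilde L u(x)=\frac{1}{m(x)}\sum_y b(x,y)(u(x)-u(y))+\frac{c(x)}{m(x)}u(x)$ for $u\in\widetilde F$. $Q^{(N)}$ is the form on $\ell^2(V,m)$ with domain $D(Q^{(N)})=\{u\in\ell^2(V,m):\frac12\sum_{x,y}b(x,y)|u(x)-u(y)|^2+\sum_x c(x)|u(x)|^2<\infty\}$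 and $Q^{(N)}(u,v)=\frac12\sum_{x,y}b(x,y)(u(x)-u(y))\overline{(v(x)-v(y))}+\sum_x c(x)u(x)\overline{v(x)}$; it is non-negative, symmetric and closed. $Q^{(D)}$ is the closure of the restriction of $Q^{(N)}$ to $C_c(V)$. For a closed non-negative form $Q$, $\langle u,v\rangle_Q=Q(u,v)+\langle u,v\rangle$ on $D(Q)$. A symmetric form $Q$ on $\ell^2(V,m)$ with domain $D$ satisfies condition (C) w.r.t. $(b,c)$ if: (C0) $Q$ is non-negative and closed; (C1) $C_c(V)\subseteq D$; (C2) for all $u\in D$ and $v\in C_c(V)$ the sum $\sum_x u(x)\overline{\widetilde L v(x)}m(x)$ converges absolutely and equals $Q(u,v)$. *)

theory Defs
  imports "HOL-Analysis.Analysis"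
begin

text \<open>Discrete measure space: vertex type 'v of class countable (finite or countably
infinite), measure m with m x > 0. Functions V -> C are 'v \<Rightarrow> complex.\<close>

definition l2 :: "('v \<Rightarrow> real) \<Rightarrow> ('v \<Rightarrow> complex) set" where
  "l2 m = {u. (\<lambda>x. (cmod (u x))\<^sup>2 * m x) summable_on UNIV}"

definition ip :: "('v \<Rightarrow> real) \<Rightarrow> ('v \<Rightarrow> complex) \<Rightarrow> ('v \<Rightarrow> complex) \<Rightarrow> complex" where
  "ip m u v = (\<Sum>\<^sub>\<infinity>x. u x * cnj (v x) * complex_of_real (m x))"

definition Cc :: "('v \<Rightarrow> complex) set" where
  "Cc = {u. finite {x. u x \<noteq> 0}}"

definition is_graph :: "('v \<Rightarrow> 'v \<Rightarrow> real) \<Rightarrow> ('v \<Rightarrow> real) \<Rightarrow> bool" where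
  "is_graph b c \<longleftrightarrow> (\<forall>x. c x \<ge> 0) \<and> (\<forall>x y. b x y \<ge> 0) \<and> (\<forall>x. b x x = 0)
     \<and> (\<forall>x y. b x y = b y x) \<and> (\<forall>x. (\<lambda>y. b x y) summable_on UNIV)"

definition Ftilde :: "('v \<Rightarrow> 'v \<Rightarrow> real) \<Rightarrow> ('v \<Rightarrow> complex) set" where
  "Ftilde b = {u. \<forall>x. (\<lambda>y. cmod (complex_of_real (b x y) * u y)) summable_on UNIV}"

definition Ltilde :: "('v \<Rightarrow> 'v \<Rightarrow> real) \<Rightarrow> ('v \<Rightarrow> real) \<Rightarrow> ('v \<Rightarrow> real)
    \<Rightarrow> ('v \<Rightarrow> complex) \<Rightarrow> 'v \<Rightarrow> complex" where
  "Ltilde b c m u x =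
     (\<Sum>\<^sub>\<infinity>y. complex_of_real (b x y) * (u x - u y)) / complex_of_real (m x)
     + complex_of_real (c x / m x) * u x"

definition qnorm :: "('v \<Rightarrow> real) \<Rightarrow> (('v \<Rightarrow> complex) \<Rightarrow> ('v \<Rightarrow> complex) \<Rightarrow> complex)
    \<Rightarrow> ('v \<Rightarrow> complex) \<Rightarrow> real" where
  "qnorm m Q u = sqrt (Re (Q u u + ip m u u))"

definition is_sym_form :: "('v \<Rightarrow> real) \<Rightarrow> ('v \<Rightarrow> complex) set
    \<Rightarrow> (('v \<Rightarrow> complex) \<Rightarrow> ('v \<Rightarrow> complex) \<Rightarrow> complex) \<Rightarrow> bool" where
  "is_sym_form m D Q \<longleftrightarrow> D \<subseteq> l2 m \<and> (\<lambda>x. 0) \<in> D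
     \<and> (\<forall>u\<in>D. \<forall>v\<in>D. (\<lambda>x. u x + v x) \<in> D)
     \<and> (\<forall>a. \<forall>u\<in>D. (\<lambda>x. a * u x) \<in> D)
     \<and> (\<forall>u\<in>D. \<forall>v\<in>D. \<forall>w\<in>D. Q (\<lambda>x. u x + v x) w = Q u w + Q v w)
     \<and> (\<forall>a. \<forall>u\<in>D. \<forall>w\<in>D. Q (\<lambda>x. a * u x) w = a * Q u w)
     \<and> (\<forall>u\<in>D. \<forall>v\<in>D. Q u v = cnj (Q v u))"

definition nonneg_form :: "('v \<Rightarrow> complex) set
    \<Rightarrow> (('v \<Rightarrow> complex) \<Rightarrow> ('v \<Rightarrow> complex) \<Rightarrow> complex) \<Rightarrow> bool" where
  "nonneg_form D Q \<longleftrightarrow> (\<forall>u\<in>D. 0 \<le> Re (Q u u))"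

definition closed_form :: "('v \<Rightarrow> real) \<Rightarrow> ('v \<Rightarrow> complex) set
    \<Rightarrow> (('v \<Rightarrow> complex) \<Rightarrow> ('v \<Rightarrow> complex) \<Rightarrow> complex) \<Rightarrow> bool" where
  "closed_form m D Q \<longleftrightarrow> (\<forall>s. (\<forall>n. s n \<in> D) \<and>
       (\<forall>e>0. \<exists>N. \<forall>n\<ge>N. \<forall>k\<ge>N. qnorm m Q (\<lambda>x. s n x - s k x) < e)
     \<longrightarrow> (\<exists>u\<in>D. (\<lambda>n. qnorm m Q (\<lambda>x. s n x - u x)) \<longlonglongrightarrow> 0))"

definition condC :: "('v \<Rightarrow> 'v \<Rightarrow> real) \<Rightarrow> ('v \<Rightarrow> real) \<Rightarrow> ('v \<Rightarrow> real)
    \<Rightarrow> ('v \<Rightarrow> complex) set \<Rightarrow> (('v \<Rightarrow> complex) \<Rightarrow> ('v \<Rightarrow> complex) \<Rightarrow> complex) \<Rightarrow> bool" where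
  "condC b c m D Q \<longleftrightarrow> is_sym_form m D Q \<and> nonneg_form D Q \<and> closed_form m D Q
     \<and> Cc \<subseteq> D
     \<and> (\<forall>u\<in>D. \<forall>v\<in>Cc.
          (\<lambda>x. cmod (u x * cnj (Ltilde b c m v x) * complex_of_real (m x))) summable_on UNIV
          \<and> (\<Sum>\<^sub>\<infinity>x. u x * cnj (Ltilde b c m v x) * complex_of_real (m x)) = Q u v)"

definition DN :: "('v \<Rightarrow> 'v \<Rightarrow> real) \<Rightarrow> ('v \<Rightarrow> real) \<Rightarrow> ('v \<Rightarrow> real) \<Rightarrow> ('v \<Rightarrow> complex) set" where
  "DN b c m = {u \<in> l2 m. (\<lambda>(x,y). b x y * (cmod (u x - u y))\<^sup>2) summable_on UNIV
                        \<and> (\<lambda>x. c x * (cmod (u x))\<^sup>2) summable_on UNIV}"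

definition QN :: "('v \<Rightarrow> 'v \<Rightarrow> real) \<Rightarrow> ('v \<Rightarrow> real)
    \<Rightarrow> ('v \<Rightarrow> complex) \<Rightarrow> ('v \<Rightarrow> complex) \<Rightarrow> complex" where
  "QN b c u v = (1/2) * (\<Sum>\<^sub>\<infinity>(x,y). complex_of_real (b x y) * (u x - u y) * cnj (v x - v y))
               + (\<Sum>\<^sub>\<infinity>x. complex_of_real (c x) * u x * cnj (v x))"

text \<open>Domain of Q^(D): closure of Cc in D(Q^(N)) w.r.t. the Q^(N)-form norm
  (the domain of the closure of Q^(N) restricted to Cc).\<close>
definition DQD :: "('v \<Rightarrow> 'v \<Rightarrow> real) \<Rightarrow> ('v \<Rightarrow> real) \<Rightarrow> ('v \<Rightarrow> real) \<Rightarrow> ('v \<Rightarrow> complex) set" where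
  "DQD b c m = {u \<in> DN b c m. \<exists>phi. (\<forall>n. phi n \<in> Cc) \<and>
        (\<lambda>n. qnorm m (QN b c) (\<lambda>x. phi n x - u x)) \<longlonglongrightarrow> 0}"

definition qip :: "('v \<Rightarrow> real) \<Rightarrow> (('v \<Rightarrow> complex) \<Rightarrow> ('v \<Rightarrow> complex) \<Rightarrow> complex)
    \<Rightarrow> ('v \<Rightarrow> complex) \<Rightarrow> ('v \<Rightarrow> complex) \<Rightarrow> complex" where
  "qip m Q u v = Q u v + ip m u v"

definition Hsp :: "('v \<Rightarrow> 'v \<Rightarrow> real) \<Rightarrow> ('v \<Rightarrow> real) \<Rightarrow> ('v \<Rightarrow> real)
    \<Rightarrow> ('v \<Rightarrow> complex) set \<Rightarrow> ('v \<Rightarrow> complex) set" where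
  "Hsp b c m D = {u \<in> D. \<forall>x. Ltilde b c m u x + u x = 0}"

end

theory Submission
  imports Defs
begin

text \<open>Testing against delta functions is the key: by condition (C),
  \<open>\<langle>u, \<delta>\<^sub>y\<rangle>\<^sub>Q = ((L + 1) u)(y) m(y)\<close>, so \<open>(L + 1) u = 0\<close> iff \<open>u\<close> is
  \<open>\<langle>\<cdot>,\<cdot>\<rangle>\<^sub>Q\<close>-orthogonal to \<open>C\<^sub>c(V)\<close>, and by Cauchy-Schwarz iff it is orthogonal
  to the \<open>Q\<close>-closure of \<open>C\<^sub>c(V)\<close>. The discrete Green formula shows that \<open>Q\<close> and
  \<open>Q\<^sup>N\<close> agree on \<open>C\<^sub>c(V)\<close>, so the two forms have the same Cauchy sequences in
  \<open>C\<^sub>c(V)\<close>; completeness of \<open>Q\<close>, pointwise control by the \<open>\<ell>\<^sup>2\<close> part of both norms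
  and Fatou's lemma for \<open>Q\<^sup>N\<close> then identify \<open>D(Q\<^sup>D)\<close> with the \<open>Q\<close>-closure of
  \<open>C\<^sub>c(V)\<close> inside \<open>D\<close>. The decomposition is the projection theorem: the limit of a
  minimizing sequence in \<open>C\<^sub>c(V)\<close> for the distance to \<open>u\<close> is the \<open>D(Q\<^sup>D)\<close>-part
  of \<open>u\<close>.\<close>

section \<open>Weighted square sums\<close>

definition wl2 :: "('i \<Rightarrow> real) \<Rightarrow> ('i \<Rightarrow> complex) set" where
  "wl2 w = {p. (\<lambda>i. w i * (cmod (p i))\<^sup>2) summable_on UNIV}"

definition wnorm2 :: "('i \<Rightarrow> real) \<Rightarrow> ('i \<Rightarrow> complex) \<Rightarrow> real" where
  "wnorm2 w p = (\<Sum>\<^sub>\<infinity>i. w i * (cmod (p i))\<^sup>2)"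

definition winner :: "('i \<Rightarrow> real) \<Rightarrow> ('i \<Rightarrow> complex) \<Rightarrow> ('i \<Rightarrow> complex) \<Rightarrow> complex" where
  "winner w p q = (\<Sum>\<^sub>\<infinity>i. complex_of_real (w i) * p i * cnj (q i))"

lemma norm_add_sq_le:
  fixes x y :: "'a::real_normed_vector"
  shows "(norm (x + y))\<^sup>2 \<le> 2 * (norm x)\<^sup>2 + 2 * (norm y)\<^sup>2"
proof -
  have "(norm (x + y))\<^sup>2 \<le> (norm x + norm y)\<^sup>2"
    by (simp add: norm_triangle_ineq power_mono)
  also have "\<dots> \<le> 2 * (norm x)\<^sup>2 + 2 * (norm y)\<^sup>2"
    using sum_squares_bound[of "norm x" "norm y"] by (simp add: power2_sum)
  finally show ?thesis .
qed

lemma infsum_of_real_summable: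
  "f summable_on A \<Longrightarrow> (\<Sum>\<^sub>\<infinity>x\<in>A. complex_of_real (f x)) = complex_of_real (\<Sum>\<^sub>\<infinity>x\<in>A. f x)"
  by (intro infsumI has_sum_of_real has_sum_infsum)

lemma wl2_scale: "p \<in> wl2 w \<Longrightarrow> (\<lambda>i. a * p i) \<in> wl2 w"
  unfolding wl2_def
  using summable_on_cmult_right[of "\<lambda>i. w i * (cmod (p i))\<^sup>2" UNIV "(cmod a)\<^sup>2"]
  by (simp add: norm_mult power_mult_distrib algebra_simps)

lemma winner_scale: "winner w (\<lambda>i. a * p i) r = a * winner w p r"
  unfolding winner_def by (simp add: infsum_cmult_right'[symmetric] mult_ac)

lemma winner_cnj: "winner w p q = cnj (winner w q p)"
  unfolding winner_def infsum_cnj[symmetric] by (simp add: mult_ac)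


context
  fixes w :: "'i \<Rightarrow> real"
  assumes w_nonneg: "\<And>i. 0 \<le> w i"
begin

lemma winner_summable:
  assumes p: "p \<in> wl2 w" and q: "q \<in> wl2 w"
  shows "(\<lambda>i. complex_of_real (w i) * p i * cnj (q i)) summable_on UNIV"
proof (rule abs_summable_summable)
  have "(\<lambda>i. (w i * (cmod (p i))\<^sup>2 + w i * (cmod (q i))\<^sup>2) * (1 / 2)) summable_on UNIV"
    using p q unfolding wl2_def by (intro summable_on_cmult_left summable_on_add) auto
  then have "(\<lambda>i. (w i * (cmod (p i))\<^sup>2 + w i * (cmod (q i))\<^sup>2) / 2) summable_on UNIV"
    by simp
  then show "(\<lambda>i. norm (complex_of_real (w i) * p i * cnj (q i))) summable_on UNIV"
  proof (rule Infinite_Sum.abs_summable_on_comparison_test')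
    fix i
    have "w i * (2 * cmod (p i) * cmod (q i)) \<le> w i * ((cmod (p i))\<^sup>2 + (cmod (q i))\<^sup>2)"
      using sum_squares_bound w_nonneg by (rule mult_left_mono)
    then show "norm (complex_of_real (w i) * p i * cnj (q i))
        \<le> (w i * (cmod (p i))\<^sup>2 + w i * (cmod (q i))\<^sup>2) / 2"
      using w_nonneg[of i] by (simp add: norm_mult algebra_simps)
  qed
qed

lemma wl2_add:
  assumes p: "p \<in> wl2 w" and q: "q \<in> wl2 w"
  shows "(\<lambda>i. p i + q i) \<in> wl2 w"
proof -
  have "(\<lambda>i. 2 * (w i * (cmod (p i))\<^sup>2) + 2 * (w i * (cmod (q i))\<^sup>2)) summable_on UNIV"
    using p q unfolding wl2_def by (intro summable_on_cmult_right summable_on_add) auto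
  then show ?thesis unfolding wl2_def
  proof (simp, rule summable_on_comparison_test)
    fix i
    show "w i * (cmod (p i + q i))\<^sup>2 \<le> 2 * (w i * (cmod (p i))\<^sup>2) + 2 * (w i * (cmod (q i))\<^sup>2)"
      using mult_left_mono[OF norm_add_sq_le w_nonneg] by (simp add: algebra_simps)
  qed (simp add: w_nonneg)
qed

lemma winner_add:
  assumes "p \<in> wl2 w" "q \<in> wl2 w" "r \<in> wl2 w"
  shows "winner w (\<lambda>i. p i + q i) r = winner w p r + winner w q r"
  unfolding winner_def distrib_left distrib_right
  by (intro infsum_add winner_summable assms)

lemma winner_self:
  assumes "p \<in> wl2 w"
  shows "winner w p p = complex_of_real (wnorm2 w p)"
proof -
  have "winner w p p = (\<Sum>\<^sub>\<infinity>i. complex_of_real (w i * (cmod (p i))\<^sup>2))"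
    unfolding winner_def
    by (simp only: mult.assoc complex_norm_square[symmetric] of_real_mult of_real_power)
  then show ?thesis
    using assms infsum_of_real_summable[of "\<lambda>i. w i * (cmod (p i))\<^sup>2" UNIV]
    unfolding wnorm2_def wl2_def by simp
qed

lemma wnorm2_nonneg: "0 \<le> wnorm2 w p"
  unfolding wnorm2_def by (intro infsum_nonneg) (simp add: w_nonneg)

lemma wnorm2_ge_term: "p \<in> wl2 w \<Longrightarrow> w i * (cmod (p i))\<^sup>2 \<le> wnorm2 w p"
  using finite_sum_le_infsum[of "\<lambda>i. w i * (cmod (p i))\<^sup>2" UNIV "{i}"] w_nonneg
  unfolding wnorm2_def wl2_def by simp

lemma wnorm2_pointwise_limit_le:
  assumes lim: "\<And>i. (\<lambda>k. p k i) \<longlonglongrightarrow> P i"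
    and bound: "\<And>k. k \<ge> N \<Longrightarrow> p k \<in> wl2 w \<and> wnorm2 w (p k) \<le> e"
  shows "P \<in> wl2 w \<and> wnorm2 w P \<le> e"
proof -
  have partial: "(\<Sum>i\<in>F. w i * (cmod (P i))\<^sup>2) \<le> e" if "finite F" for F
  proof (rule tendsto_upperbound)
    show "(\<lambda>k. \<Sum>i\<in>F. w i * (cmod (p k i))\<^sup>2) \<longlonglongrightarrow> (\<Sum>i\<in>F. w i * (cmod (P i))\<^sup>2)"
      by (intro tendsto_sum tendsto_mult tendsto_const tendsto_power tendsto_norm lim)
    show "\<forall>\<^sub>F k in sequentially. (\<Sum>i\<in>F. w i * (cmod (p k i))\<^sup>2) \<le> e"
    proof (rule eventually_sequentiallyI)
      fix k assume "N \<le> k"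
      then show "(\<Sum>i\<in>F. w i * (cmod (p k i))\<^sup>2) \<le> e"
        using bound[of k] finite_sum_le_infsum[of "\<lambda>i. w i * (cmod (p k i))\<^sup>2" UNIV F]
          that w_nonneg unfolding wnorm2_def wl2_def by force
    qed
  qed simp
  then have "(\<lambda>i. w i * (cmod (P i))\<^sup>2) summable_on UNIV"
    by (intro nonneg_bdd_above_summable_on) (auto intro!: bdd_aboveI simp: w_nonneg)
  then show ?thesis
    unfolding wl2_def wnorm2_def using partial by (auto intro!: infsum_le_finite_sums)
qed

end

section \<open>Positive Hermitian forms on function spaces\<close>

lemma cauchy_of_bound:
  fixes d :: "nat \<Rightarrow> nat \<Rightarrow> real"
  assumes bound: "\<And>n k. d n k \<le> 2 * g n + 2 * g k" and g: "g \<longlonglongrightarrow> 0" and e: "0 < e"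
  shows "\<exists>N. \<forall>n\<ge>N. \<forall>k\<ge>N. d n k < e"
proof -
  have "0 < e / 4" using e by simp
  from g[unfolded LIMSEQ_iff, rule_format, OF this]
  obtain N where N: "\<And>n. n \<ge> N \<Longrightarrow> \<bar>g n\<bar> < e / 4"
    by auto
  have "d n k < e" if "n \<ge> N" "k \<ge> N" for n k
    using bound[of n k] N[OF that(1)] N[OF that(2)] by linarith
  then show ?thesis by blast
qed

lemma tendsto_sqrt_zero_iff:
  fixes g :: "nat \<Rightarrow> real"
  assumes "\<And>n. 0 \<le> g n"
  shows "(\<lambda>n. sqrt (g n)) \<longlonglongrightarrow> 0 \<longleftrightarrow> g \<longlonglongrightarrow> 0"
proof
  assume "(\<lambda>n. sqrt (g n)) \<longlonglongrightarrow> 0"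
  from tendsto_power[OF this, of 2] show "g \<longlonglongrightarrow> 0" using assms by simp
next
  assume "g \<longlonglongrightarrow> 0"
  from tendsto_real_sqrt[OF this] show "(\<lambda>n. sqrt (g n)) \<longlonglongrightarrow> 0" by simp
qed

lemma quadratic_form_discriminant:
  fixes A B X :: real
  assumes nonneg: "\<And>s. 0 \<le> A - 2 * s * X + s\<^sup>2 * X * B" and "0 \<le> X" "0 \<le> B"
  shows "X \<le> A * B"
proof (cases "X = 0")
  case True
  then show ?thesis using nonneg[of 0] \<open>0 \<le> B\<close> by simp
next
  case False
  then have "0 < X" using \<open>0 \<le> X\<close> by simp
  show ?thesis
  proof (cases "B = 0")
    case True
    have "0 \<le> A - 2 * ((A + 1) / (2 * X)) * X" using nonneg[of "(A + 1) / (2 * X)"] True by simp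
    also have "\<dots> = -1" using \<open>0 < X\<close> by (simp add: field_simps)
    finally show ?thesis by simp
  next
    case False
    then have "0 < B" using \<open>0 \<le> B\<close> by simp
    have "0 \<le> A - 2 * (1 / B) * X + (1 / B)\<^sup>2 * X * B" by (rule nonneg)
    also have "\<dots> = A - X / B" using \<open>0 < B\<close> by (simp add: field_simps power2_eq_square)
    finally show ?thesis using \<open>0 < B\<close> by (simp add: field_simps)
  qed
qed

definition fun_subspace :: "('a \<Rightarrow> complex) set \<Rightarrow> bool" where
  "fun_subspace C \<longleftrightarrow> (\<lambda>x. 0) \<in> C \<and> (\<forall>u\<in>C. \<forall>v\<in>C. (\<lambda>x. u x + v x) \<in> C)
     \<and> (\<forall>a. \<forall>u\<in>C. (\<lambda>x. a * u x) \<in> C)"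

lemma
  assumes "fun_subspace C"
  shows fun_subspace_zero: "(\<lambda>x. 0) \<in> C"
    and fun_subspace_add: "u \<in> C \<Longrightarrow> v \<in> C \<Longrightarrow> (\<lambda>x. u x + v x) \<in> C"
    and fun_subspace_scale: "u \<in> C \<Longrightarrow> (\<lambda>x. a * u x) \<in> C"
  using assms unfolding fun_subspace_def by blast+

lemma fun_subspace_diff: "fun_subspace C \<Longrightarrow> u \<in> C \<Longrightarrow> v \<in> C \<Longrightarrow> (\<lambda>x. u x - v x) \<in> C"
  using fun_subspace_add[of C u "\<lambda>x. (-1) * v x"] fun_subspace_scale[of C v "-1"] by simp

locale pos_herm_form =
  fixes S :: "('a \<Rightarrow> complex) set"
    and F :: "('a \<Rightarrow> complex) \<Rightarrow> ('a \<Rightarrow> complex) \<Rightarrow> complex"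
  assumes add_closed: "u \<in> S \<Longrightarrow> v \<in> S \<Longrightarrow> (\<lambda>x. u x + v x) \<in> S"
    and scale_closed: "u \<in> S \<Longrightarrow> (\<lambda>x. a * u x) \<in> S"
    and add_left: "u \<in> S \<Longrightarrow> v \<in> S \<Longrightarrow> w \<in> S \<Longrightarrow> F (\<lambda>x. u x + v x) w = F u w + F v w"
    and scale_left: "u \<in> S \<Longrightarrow> w \<in> S \<Longrightarrow> F (\<lambda>x. a * u x) w = a * F u w"
    and hermitian: "u \<in> S \<Longrightarrow> v \<in> S \<Longrightarrow> F u v = cnj (F v u)"
    and nonneg: "u \<in> S \<Longrightarrow> 0 \<le> Re (F u u)"
begin

abbreviation norm2 :: "('a \<Rightarrow> complex) \<Rightarrow> real" where
  "norm2 u \<equiv> Re (F u u)"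

lemma zero_left: "w \<in> S \<Longrightarrow> F (\<lambda>x. 0) w = 0"
  using scale_left[of w w 0] by simp

lemma diff_closed: "u \<in> S \<Longrightarrow> v \<in> S \<Longrightarrow> (\<lambda>x. u x - v x) \<in> S"
  using add_closed[of u "\<lambda>x. (-1) * v x"] scale_closed[of v "-1"] by simp

lemma diff_left: "u \<in> S \<Longrightarrow> v \<in> S \<Longrightarrow> w \<in> S \<Longrightarrow> F (\<lambda>x. u x - v x) w = F u w - F v w"
  using add_left[of u "\<lambda>x. (-1) * v x" w] scale_closed[of v "-1"] scale_left[of v w "-1"] by simp

lemma add_right: "u \<in> S \<Longrightarrow> v \<in> S \<Longrightarrow> w \<in> S \<Longrightarrow> F u (\<lambda>x. v x + w x) = F u v + F u w"
  using hermitian[of u "\<lambda>x. v x + w x"] add_closed[of v w] add_left[of v w u]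
    hermitian[of v u] hermitian[of w u]
  by simp

lemma scale_right: "u \<in> S \<Longrightarrow> v \<in> S \<Longrightarrow> F u (\<lambda>x. a * v x) = cnj a * F u v"
  using hermitian[of u "\<lambda>x. a * v x"] scale_closed[of v a] scale_left[of v u a] hermitian[of v u]
  by simp

lemma diff_right: "u \<in> S \<Longrightarrow> v \<in> S \<Longrightarrow> w \<in> S \<Longrightarrow> F u (\<lambda>x. v x - w x) = F u v - F u w"
  using hermitian[of u "\<lambda>x. v x - w x"] diff_closed[of v w] diff_left[of v w u]
    hermitian[of v u] hermitian[of w u]
  by simp

lemma norm2_add_scaled:
  assumes u: "u \<in> S" and v: "v \<in> S"
  shows "norm2 (\<lambda>x. u x + t * v x)
       = norm2 u + 2 * Re (cnj t * F u v) + (cmod t)\<^sup>2 * norm2 v"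
proof -
  have tv: "(\<lambda>x. t * v x) \<in> S" using v by (rule scale_closed)
  have "F (\<lambda>x. u x + t * v x) (\<lambda>x. u x + t * v x)
      = F u u + cnj t * F u v + (t * cnj (F u v) + (t * cnj t) * F v v)"
    using u v tv add_closed[OF u tv]
    by (simp add: add_left add_right scale_left scale_right hermitian[of v u] mult.assoc)
  also have "t * cnj t = complex_of_real ((cmod t)\<^sup>2)"
    by (rule complex_norm_square[symmetric])
  finally show ?thesis by simp
qed

lemma norm2_scale:
  assumes "u \<in> S"
  shows "norm2 (\<lambda>x. a * u x) = (cmod a)\<^sup>2 * norm2 u"
proof -
  have "F (\<lambda>x. a * u x) (\<lambda>x. a * u x) = (a * cnj a) * F u u"
    using assms scale_closed[OF assms] by (simp add: scale_left scale_right mult.assoc)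
  also have "a * cnj a = complex_of_real ((cmod a)\<^sup>2)"
    by (rule complex_norm_square[symmetric])
  finally show ?thesis by simp
qed

lemma norm2_add_scaled_real:
  assumes "u \<in> S" "v \<in> S"
  shows "norm2 (\<lambda>x. u x + - (complex_of_real s * F u v) * v x)
       = norm2 u - 2 * s * (cmod (F u v))\<^sup>2 + s\<^sup>2 * (cmod (F u v))\<^sup>2 * norm2 v"
proof -
  have "Re (cnj (- (complex_of_real s * F u v)) * F u v) = - s * (cmod (F u v))\<^sup>2"
    unfolding cmod_power2 by (simp add: power2_eq_square algebra_simps)
  from norm2_add_scaled[OF assms, of "- (complex_of_real s * F u v)", unfolded this]
  show ?thesis by (simp add: norm_mult power_mult_distrib)
qed

lemma cauchy_schwarz:
  assumes "u \<in> S" "v \<in> S"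
  shows "(cmod (F u v))\<^sup>2 \<le> norm2 u * norm2 v"
proof (rule quadratic_form_discriminant)
  fix s :: real
  show "0 \<le> norm2 u - 2 * s * (cmod (F u v))\<^sup>2 + s\<^sup>2 * (cmod (F u v))\<^sup>2 * norm2 v"
    using nonneg[OF add_closed[OF assms(1) scale_closed[OF assms(2),
          of "- (complex_of_real s * F u v)"]]]
    unfolding norm2_add_scaled_real[OF assms] .
qed (use nonneg assms in auto)

lemma orthogonal_if_minimal:
  assumes h: "h \<in> S" and g: "g \<in> S"
    and minimal: "\<And>t. norm2 h \<le> norm2 (\<lambda>x. h x + t * g x)"
  shows "F h g = 0"
proof -
  have "(cmod (F h g))\<^sup>2 \<le> 0 * norm2 g"
  proof (rule quadratic_form_discriminant)
    fix s :: real
    show "0 \<le> 0 - 2 * s * (cmod (F h g))\<^sup>2 + s\<^sup>2 * (cmod (F h g))\<^sup>2 * norm2 g"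
      using minimal[of "- (complex_of_real s * F h g)", unfolded norm2_add_scaled_real[OF h g]]
      by simp
  qed (use nonneg g in auto)
  then show ?thesis by simp
qed

lemma parallelogram:
  assumes "u \<in> S" "v \<in> S"
  shows "norm2 (\<lambda>x. u x + v x) + norm2 (\<lambda>x. u x - v x) = 2 * norm2 u + 2 * norm2 v"
  using norm2_add_scaled[OF assms, of 1] norm2_add_scaled[OF assms, of "-1"] by simp

lemma norm2_diff_le:
  assumes "u \<in> S" "v \<in> S"
  shows "norm2 (\<lambda>x. u x - v x) \<le> 2 * norm2 u + 2 * norm2 v"
  using parallelogram[OF assms] nonneg[OF add_closed[OF assms]] by linarith

lemma tendsto_right_zero:
  assumes u: "u \<in> S" and v: "\<And>n. v n \<in> S" and lim: "(\<lambda>n. norm2 (v n)) \<longlonglongrightarrow> 0"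
  shows "(\<lambda>n. F u (v n)) \<longlonglongrightarrow> 0"
proof (rule tendsto_norm_zero_cancel, rule Lim_null_comparison)
  show "\<forall>\<^sub>F n in sequentially. norm (norm (F u (v n))) \<le> sqrt (norm2 u * norm2 (v n))"
    using cauchy_schwarz[OF u v] by (auto intro!: always_eventually real_le_rsqrt)
  show "(\<lambda>n. sqrt (norm2 u * norm2 (v n))) \<longlonglongrightarrow> 0"
    using tendsto_real_sqrt[OF tendsto_mult[OF tendsto_const lim]] by simp
qed

lemma norm2_tendsto_add_null:
  assumes u: "u \<in> S" and e: "\<And>n. e n \<in> S" and lim: "(\<lambda>n. norm2 (e n)) \<longlonglongrightarrow> 0"
  shows "(\<lambda>n. norm2 (\<lambda>x. u x + e n x)) \<longlonglongrightarrow> norm2 u"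
proof -
  have "(\<lambda>n. norm2 u + 2 * Re (F u (e n)) + norm2 (e n)) \<longlonglongrightarrow> norm2 u + 2 * Re 0 + 0"
    by (intro tendsto_intros tendsto_right_zero[OF u e lim] lim)
  then show ?thesis
    using norm2_add_scaled[OF u e, of 1] by simp
qed

lemma norm2_diff_commute:
  assumes "u \<in> S" "v \<in> S"
  shows "norm2 (\<lambda>x. v x - u x) = norm2 (\<lambda>x. u x - v x)"
  using norm2_scale[OF diff_closed[OF assms], of "-1"] by simp

lemma cauchy_of_tendsto:
  assumes s: "\<And>n. s n \<in> S" and w: "w \<in> S"
    and lim: "(\<lambda>n. norm2 (\<lambda>x. s n x - w x)) \<longlonglongrightarrow> 0" and "0 < e"
  shows "\<exists>N. \<forall>n\<ge>N. \<forall>k\<ge>N. norm2 (\<lambda>x. s n x - s k x) < e"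
proof (rule cauchy_of_bound[OF _ lim \<open>0 < e\<close>])
  fix n k
  show "norm2 (\<lambda>x. s n x - s k x)
      \<le> 2 * norm2 (\<lambda>x. s n x - w x) + 2 * norm2 (\<lambda>x. s k x - w x)"
    using norm2_diff_le[OF diff_closed[OF s w] diff_closed[OF s w], of n k] by simp
qed

lemma orthogonal_tendsto:
  assumes u: "u \<in> S" and s: "\<And>n. s n \<in> S" and v: "v \<in> S"
    and orth: "\<And>n. F u (s n) = 0" and lim: "(\<lambda>n. norm2 (\<lambda>x. s n x - v x)) \<longlonglongrightarrow> 0"
  shows "F u v = 0"
proof -
  have "(\<lambda>n. F u (\<lambda>x. s n x - v x)) \<longlonglongrightarrow> 0"
    using tendsto_right_zero[OF u diff_closed[OF s v] lim] .
  moreover have "F u (\<lambda>x. s n x - v x) = - F u v" for n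
    using diff_right[OF u s v] orth by simp
  ultimately show ?thesis using LIMSEQ_unique[OF tendsto_const] by fastforce
qed

lemma minimizing_sequence_bound:
  assumes C: "fun_subspace C" "C \<subseteq> S" and u: "u \<in> S" and phi: "\<And>n. phi n \<in> C"
    and inf: "\<And>c. c \<in> C \<Longrightarrow> d \<le> norm2 (\<lambda>x. u x - c x)"
    and approx: "\<And>n. norm2 (\<lambda>x. u x - phi n x) \<le> d + g n"
  shows "norm2 (\<lambda>x. phi n x - phi k x) \<le> 2 * g n + 2 * g k"
proof -
  have in_S: "(\<lambda>x. u x - phi j x) \<in> S" for j
    using C phi u by (blast intro: diff_closed)
  define mid where "mid = (\<lambda>x. (1 / 2) * (phi n x + phi k x))"
  have "mid \<in> C" unfolding mid_def by (intro fun_subspace_scale fun_subspace_add C(1) phi)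
  have "(\<lambda>x. u x - mid x) \<in> S" using u \<open>mid \<in> C\<close> C(2) by (blast intro: diff_closed)
  then have "norm2 (\<lambda>x. (u x - phi k x) + (u x - phi n x)) = 4 * norm2 (\<lambda>x. u x - mid x)"
    using norm2_scale[of "\<lambda>x. u x - mid x" 2] by (simp add: mid_def algebra_simps)
  moreover have "(\<lambda>x. (u x - phi k x) - (u x - phi n x)) = (\<lambda>x. phi n x - phi k x)"
    by simp
  ultimately have "4 * norm2 (\<lambda>x. u x - mid x) + norm2 (\<lambda>x. phi n x - phi k x)
      = 2 * norm2 (\<lambda>x. u x - phi k x) + 2 * norm2 (\<lambda>x. u x - phi n x)"
    using parallelogram[OF in_S in_S, of k n] by simp
  then show ?thesis
    using inf[OF \<open>mid \<in> C\<close>] approx[of n] approx[of k] by linarith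
qed

text \<open>Since \<open>phi n - t c\<close> is again a competitor, the limit \<open>w\<close> of a minimizing sequence
  minimizes the distance to \<open>u\<close> along every line \<open>w - t c\<close>.\<close>
lemma orthogonal_if_minimizing_limit:
  assumes C: "fun_subspace C" "C \<subseteq> S" and u: "u \<in> S" and w: "w \<in> S" and phi: "\<And>n. phi n \<in> C"
    and inf: "\<And>c. c \<in> C \<Longrightarrow> d \<le> norm2 (\<lambda>x. u x - c x)"
    and dist: "(\<lambda>n. norm2 (\<lambda>x. u x - phi n x)) \<longlonglongrightarrow> d"
    and lim: "(\<lambda>n. norm2 (\<lambda>x. phi n x - w x)) \<longlonglongrightarrow> 0"
    and c: "c \<in> C"
  shows "F (\<lambda>x. u x - w x) c = 0"
proof -
  have CS: "c \<in> C \<Longrightarrow> c \<in> S" for c using C(2) by blast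
  have w_phi: "(\<lambda>x. w x - phi n x) \<in> S" for n using w CS[OF phi] by (rule diff_closed)
  have lim': "(\<lambda>n. norm2 (\<lambda>x. w x - phi n x)) \<longlonglongrightarrow> 0"
    using lim norm2_diff_commute[OF CS[OF phi] w] by simp
  have along_line: "(\<lambda>n. norm2 (\<lambda>x. u x - (phi n x - t * c x)))
      \<longlonglongrightarrow> norm2 (\<lambda>x. u x - w x + t * c x)" if "c \<in> C" for c t
  proof -
    have "(\<lambda>x. u x - w x + t * c x) \<in> S"
      using u w CS[OF that] by (intro add_closed diff_closed scale_closed)
    from norm2_tendsto_add_null[OF this w_phi lim']
    show ?thesis by (simp add: algebra_simps)
  qed
  have "(\<lambda>n. norm2 (\<lambda>x. u x - phi n x)) \<longlonglongrightarrow> norm2 (\<lambda>x. u x - w x)"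
    using along_line[OF fun_subspace_zero[OF C(1)], of 0] by simp
  with dist have "norm2 (\<lambda>x. u x - w x) = d" by (rule LIMSEQ_unique[rotated])
  show ?thesis
  proof (rule orthogonal_if_minimal)
    show "(\<lambda>x. u x - w x) \<in> S" using u w by (rule diff_closed)
    show "c \<in> S" using c by (rule CS)
    fix t
    have "(\<lambda>x. phi n x - t * c x) \<in> C" for n
      by (intro fun_subspace_diff fun_subspace_scale C(1) phi c)
    then have "\<forall>\<^sub>F n in sequentially. d \<le> norm2 (\<lambda>x. u x - (phi n x - t * c x))"
      by (simp add: inf)
    with along_line[OF c, of t] have "d \<le> norm2 (\<lambda>x. u x - w x + t * c x)"
      by (rule tendsto_lowerbound) simp
    then show "norm2 (\<lambda>x. u x - w x) \<le> norm2 (\<lambda>x. u x - w x + t * c x)"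
      using \<open>norm2 (\<lambda>x. u x - w x) = d\<close> by simp
  qed
qed

end

locale complete_pos_herm_form = pos_herm_form +
  assumes complete: "(\<And>n. s n \<in> S) \<Longrightarrow>
      (\<And>e. 0 < e \<Longrightarrow> \<exists>N. \<forall>n\<ge>N. \<forall>k\<ge>N. Re (F (\<lambda>x. s n x - s k x) (\<lambda>x. s n x - s k x)) < e) \<Longrightarrow>
      \<exists>u\<in>S. (\<lambda>n. Re (F (\<lambda>x. s n x - u x) (\<lambda>x. s n x - u x))) \<longlonglongrightarrow> 0"
begin

lemma projection:
  assumes C: "fun_subspace C" "C \<subseteq> S" and u: "u \<in> S"
  obtains phi w where "\<And>n. phi n \<in> C" "w \<in> S" "(\<lambda>n. norm2 (\<lambda>x. phi n x - w x)) \<longlonglongrightarrow> 0"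
    "\<And>c. c \<in> C \<Longrightarrow> F (\<lambda>x. u x - w x) c = 0"
proof -
  have CS: "c \<in> C \<Longrightarrow> c \<in> S" for c using C(2) by blast
  define d where "d = (INF c\<in>C. norm2 (\<lambda>x. u x - c x))"
  have bdd: "bdd_below ((\<lambda>c. norm2 (\<lambda>x. u x - c x)) ` C)"
    by (rule bdd_belowI2[of _ 0]) (use u CS in \<open>blast intro: nonneg diff_closed\<close>)
  have inf: "c \<in> C \<Longrightarrow> d \<le> norm2 (\<lambda>x. u x - c x)" for c
    unfolding d_def by (rule cINF_lower[OF bdd])
  have "\<exists>c\<in>C. norm2 (\<lambda>x. u x - c x) < d + 1 / (Suc n)" for n
    unfolding d_def using fun_subspace_zero[OF C(1)]
    by (intro cINF_less_iff[OF _ bdd, THEN iffD1]) auto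
  then obtain phi where phi: "\<And>n. phi n \<in> C"
    and approx: "\<And>n. norm2 (\<lambda>x. u x - phi n x) < d + 1 / (Suc n)"
    by metis
  have g: "(\<lambda>n. 1 / real (Suc n)) \<longlonglongrightarrow> 0"
    using LIMSEQ_inverse_real_of_nat by (simp add: inverse_eq_divide)
  obtain w where w: "w \<in> S" and lim: "(\<lambda>n. norm2 (\<lambda>x. phi n x - w x)) \<longlonglongrightarrow> 0"
    using complete[of phi] CS[OF phi]
      cauchy_of_bound[OF minimizing_sequence_bound[OF C u phi inf less_imp_le[OF approx]] g]
    by blast
  have "(\<lambda>n. norm2 (\<lambda>x. u x - phi n x)) \<longlonglongrightarrow> d"
  proof (rule tendsto_sandwich)
    show "\<forall>\<^sub>F n in sequentially. d \<le> norm2 (\<lambda>x. u x - phi n x)"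
      using inf[OF phi] by simp
    show "\<forall>\<^sub>F n in sequentially. norm2 (\<lambda>x. u x - phi n x) \<le> d + 1 / (Suc n)"
      by (intro always_eventually allI less_imp_le approx)
    show "(\<lambda>n. d + 1 / real (Suc n)) \<longlonglongrightarrow> d"
      using tendsto_add[OF tendsto_const g] by simp
  qed simp
  with orthogonal_if_minimizing_limit[OF C u w phi inf _ lim] that phi w lim
  show ?thesis by blast
qed

end

section \<open>Finitely supported functions\<close>

lemma infsum_single_point:
  assumes "\<And>x. x \<noteq> y \<Longrightarrow> f x = 0"
  shows "(\<Sum>\<^sub>\<infinity>x. f x) = (f y :: 'b::{comm_monoid_add,t2_space})"
  by (rule infsumI, rule has_sum_finite_neutralI[of "{y}"]) (use assms in auto)

lemma has_sum_row:
  fixes h :: "'a \<Rightarrow> 'b::{comm_monoid_add,topological_space}"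
  assumes "(h has_sum s) UNIV"
  shows "((\<lambda>p. if fst p = y then h (snd p) else 0) has_sum s) UNIV"
proof -
  have "((\<lambda>p. if fst p = y then h (snd p) else 0) has_sum s) (range (Pair y))"
    using has_sum_reindex[of "Pair y" UNIV "\<lambda>p. if fst p = y then h (snd p) else 0" s] assms
    by (simp add: inj_on_def o_def)
  then show ?thesis by (subst (asm) has_sum_cong_neutral) auto
qed

lemma has_sum_col:
  fixes h :: "'a \<Rightarrow> 'b::{comm_monoid_add,topological_space}"
  assumes "(h has_sum s) UNIV"
  shows "((\<lambda>p. if snd p = y then h (fst p) else 0) has_sum s) UNIV"
proof -
  have "((\<lambda>p. if snd p = y then h (fst p) else 0) has_sum s) (range (\<lambda>x. (x, y)))"
    using has_sum_reindex[of "\<lambda>x. (x, y)" UNIV "\<lambda>p. if snd p = y then h (fst p) else 0" s] assms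
    by (simp add: inj_on_def o_def)
  then show ?thesis by (subst (asm) has_sum_cong_neutral) auto
qed

definition delta :: "'v \<Rightarrow> 'v \<Rightarrow> complex" where
  "delta y = (\<lambda>x. if x = y then 1 else 0)"

lemma delta_Cc: "delta y \<in> Cc"
  unfolding Cc_def delta_def by simp

lemma fun_subspace_Cc: "fun_subspace Cc"
proof -
  have "finite {x. u x + v x \<noteq> 0}" "finite {x. a * u x \<noteq> 0}"
    if "finite {x. u x \<noteq> 0}" "finite {x. v x \<noteq> 0}" for u v :: "'v \<Rightarrow> complex" and a
    using that by (auto intro: rev_finite_subset)
  then show ?thesis unfolding fun_subspace_def Cc_def by auto
qed

lemma Cc_induct[consumes 1, case_names zero add_delta]:
  assumes u: "u \<in> Cc" and zero: "P (\<lambda>x. 0)"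
    and add_delta: "\<And>u a y. u \<in> Cc \<Longrightarrow> P u \<Longrightarrow> P (\<lambda>x. u x + a * delta y x)"
  shows "P u"
proof -
  have "finite F \<Longrightarrow> {x. u x \<noteq> 0} \<subseteq> F \<Longrightarrow> P u" for F
  proof (induction F arbitrary: u rule: finite_induct)
    case empty
    then have "u = (\<lambda>x. 0)" by auto
    then show ?case using zero by simp
  next
    case (insert y F)
    define u' where "u' = (\<lambda>x. if x = y then 0 else u x)"
    have "{x. u' x \<noteq> 0} \<subseteq> F" using insert.prems by (auto simp: u'_def)
    then have "u' \<in> Cc" "P u'" using insert.hyps insert.IH by (auto simp: Cc_def finite_subset)
    moreover have "u = (\<lambda>x. u' x + u y * delta y x)" by (auto simp: u'_def delta_def)
    ultimately show ?case using add_delta by metis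
  qed
  then show ?thesis using u by (simp add: Cc_def)
qed

lemma Cc_subset_Ftilde: "Cc \<subseteq> Ftilde b"
  unfolding Cc_def Ftilde_def
  by (auto intro!: finite_nonzero_values_imp_summable_on elim!: rev_finite_subset)

section \<open>The Neumann form of a graph\<close>

definition edge_diff :: "('v \<Rightarrow> complex) \<Rightarrow> 'v \<times> 'v \<Rightarrow> complex" where
  "edge_diff u = (\<lambda>(x, y). u x - u y)"

lemma edge_diff_add: "edge_diff (\<lambda>x. u x + v x) = (\<lambda>p. edge_diff u p + edge_diff v p)"
  unfolding edge_diff_def by (auto simp: case_prod_beta)

lemma edge_diff_scale: "edge_diff (\<lambda>x. a * u x) = (\<lambda>p. a * edge_diff u p)"
  unfolding edge_diff_def by (auto simp: case_prod_beta algebra_simps)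

lemma ip_eq_winner: "ip m u v = winner m u v"
  unfolding ip_def winner_def by (simp add: mult_ac)

lemma QN_eq_winner:
  "QN b c u v = 1 / 2 * winner (case_prod b) (edge_diff u) (edge_diff v) + winner c u v"
  unfolding QN_def winner_def edge_diff_def case_prod_unfold by simp

lemma DN_iff: "u \<in> DN b c m \<longleftrightarrow> u \<in> wl2 m \<and> edge_diff u \<in> wl2 (case_prod b) \<and> u \<in> wl2 c"
  unfolding DN_def wl2_def l2_def edge_diff_def case_prod_unfold by (simp add: mult.commute)

lemma qip_point_bound:
  assumes m: "\<And>x. 0 \<le> m x" and u: "u \<in> wl2 m" and F: "0 \<le> Re (F u u)"
  shows "(cmod (u x))\<^sup>2 * m x \<le> Re (qip m F u u)"
proof -
  have "Re (qip m F u u) = Re (F u u) + wnorm2 m u"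
    unfolding qip_def ip_eq_winner winner_self[OF m u] by simp
  then show ?thesis
    using wnorm2_ge_term[OF m u, of x] F by (simp add: mult.commute)
qed

lemma tendsto_of_weighted_sq_bound:
  assumes bound: "\<And>n. (cmod (s n x - w x))\<^sup>2 * m x \<le> g n" and m: "0 < m x"
    and g: "g \<longlonglongrightarrow> 0"
  shows "(\<lambda>n. s n x) \<longlonglongrightarrow> w x"
proof -
  have lim: "(\<lambda>n. sqrt (g n / m x)) \<longlonglongrightarrow> 0"
    using tendsto_real_sqrt[OF tendsto_divide[OF g tendsto_const[of "m x"]]] m by simp
  have le: "norm (norm (s n x - w x)) \<le> sqrt (g n / m x)" for n
  proof -
    have "(cmod (s n x - w x))\<^sup>2 \<le> g n / m x" using bound[of n] m by (simp add: field_simps)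
    then show ?thesis by (simp add: real_le_rsqrt)
  qed
  have "(\<lambda>n. norm (s n x - w x)) \<longlonglongrightarrow> 0"
    by (rule Lim_null_comparison[OF always_eventually lim]) (use le in blast)
  then have "(\<lambda>n. s n x - w x) \<longlonglongrightarrow> 0"
    by (rule tendsto_norm_zero_cancel)
  then show ?thesis by (simp add: LIM_zero_iff)
qed

locale weighted_graph =
  fixes b :: "'v \<Rightarrow> 'v \<Rightarrow> real" and c :: "'v \<Rightarrow> real" and m :: "'v \<Rightarrow> real"
  assumes m_pos: "\<forall>x. 0 < m x" and graph: "is_graph b c"
begin

lemma m_nonneg: "0 \<le> m x" using m_pos less_imp_le by blast
lemma m_nonzero: "m x \<noteq> 0" using m_pos by (metis less_irrefl)
lemma b_nonneg: "0 \<le> b x y" using graph unfolding is_graph_def by simp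
lemma b_pair_nonneg: "0 \<le> case_prod b p" by (cases p) (simp add: b_nonneg)
lemma c_nonneg: "0 \<le> c x" using graph unfolding is_graph_def by simp
lemma b_sym: "b x y = b y x" using graph unfolding is_graph_def by simp
lemma b_diag: "b x x = 0" using graph unfolding is_graph_def by simp
lemma b_summable: "(\<lambda>y. b x y) summable_on UNIV" using graph unfolding is_graph_def by blast

lemma neumann_norm2:
  "u \<in> DN b c m \<Longrightarrow> Re (qip m (QN b c) u u)
     = wnorm2 (case_prod b) (edge_diff u) / 2 + wnorm2 c u + wnorm2 m u"
  unfolding qip_def QN_eq_winner ip_eq_winner DN_iff
  by (simp add: winner_self b_pair_nonneg c_nonneg m_nonneg)

lemma QN_nonneg: "u \<in> DN b c m \<Longrightarrow> 0 \<le> Re (QN b c u u)"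
  unfolding QN_eq_winner DN_iff
  using wnorm2_nonneg[of "case_prod b", OF b_pair_nonneg] wnorm2_nonneg[of c, OF c_nonneg]
  by (simp add: winner_self b_pair_nonneg c_nonneg)

sublocale neumann: pos_herm_form "DN b c m" "qip m (QN b c)"
proof
  fix u v w a assume u: "u \<in> DN b c m" and v: "v \<in> DN b c m" and w: "w \<in> DN b c m"
  note wl2 = u[unfolded DN_iff] v[unfolded DN_iff] w[unfolded DN_iff]
  show "(\<lambda>x. u x + v x) \<in> DN b c m"
    unfolding DN_iff edge_diff_add using wl2
    by (simp add: wl2_add b_pair_nonneg c_nonneg m_nonneg)
  show "(\<lambda>x. a * u x) \<in> DN b c m"
    unfolding DN_iff edge_diff_scale using wl2 by (simp add: wl2_scale)
  show "qip m (QN b c) (\<lambda>x. u x + v x) w = qip m (QN b c) u w + qip m (QN b c) v w"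
    unfolding qip_def QN_eq_winner ip_eq_winner edge_diff_add using wl2
    by (simp add: winner_add b_pair_nonneg c_nonneg m_nonneg algebra_simps)
  show "qip m (QN b c) u v = cnj (qip m (QN b c) v u)"
    unfolding qip_def QN_eq_winner ip_eq_winner
    using winner_cnj[of "case_prod b" "edge_diff u" "edge_diff v"] winner_cnj[of c u v]
      winner_cnj[of m u v]
    by (simp add: b_pair_nonneg c_nonneg m_nonneg)
  show "0 \<le> Re (qip m (QN b c) u u)"
    using neumann_norm2[OF u] wnorm2_nonneg[of "case_prod b"] wnorm2_nonneg[of c] wnorm2_nonneg[of m]
    by (simp add: b_pair_nonneg c_nonneg m_nonneg)
next
  fix u w a assume "u \<in> DN b c m" "w \<in> DN b c m"
  show "qip m (QN b c) (\<lambda>x. a * u x) w = a * qip m (QN b c) u w"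
    unfolding qip_def QN_eq_winner ip_eq_winner edge_diff_scale
    by (simp add: winner_scale algebra_simps)
qed

lemma delta_DN: "delta y \<in> DN b c m"
  unfolding DN_iff
proof (intro conjI)
  show "delta y \<in> wl2 m" "delta y \<in> wl2 c"
    unfolding wl2_def delta_def
    by (auto intro!: finite_nonzero_values_imp_summable_on elim!: rev_finite_subset[of "{y}"])
  have "(\<lambda>p. (if fst p = y then b y (snd p) else 0) + (if snd p = y then b (fst p) y else 0))
      summable_on UNIV"
  proof (rule summable_on_add)
    obtain s where s: "(b y has_sum s) UNIV" using b_summable[of y] by (auto simp: summable_on_def)
    moreover have "(\<lambda>x. b x y) = b y" using b_sym by auto
    ultimately show "(\<lambda>p. if fst p = y then b y (snd p) else 0) summable_on UNIV"
      "(\<lambda>p. if snd p = y then b (fst p) y else 0) summable_on UNIV"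
      using has_sum_row[of "b y" s y] has_sum_col[of "\<lambda>x. b x y" s y] by (auto simp: summable_on_def)
  qed
  then show "edge_diff (delta y) \<in> wl2 (case_prod b)"
    unfolding wl2_def mem_Collect_eq
  proof (rule summable_on_comparison_test)
    fix p :: "'v \<times> 'v"
    show "case_prod b p * (cmod (edge_diff (delta y) p))\<^sup>2
        \<le> (if fst p = y then b y (snd p) else 0) + (if snd p = y then b (fst p) y else 0)"
      by (cases p) (auto simp: edge_diff_def delta_def b_diag b_nonneg)
  qed (simp add: b_pair_nonneg)
qed

lemma Cc_subset_DN: "Cc \<subseteq> DN b c m"
proof
  fix u :: "'v \<Rightarrow> complex" assume "u \<in> Cc"
  then show "u \<in> DN b c m"
  proof (induction rule: Cc_induct)
    case zero
    show ?case using neumann.scale_closed[OF delta_DN, of 0] by simp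
  next
    case (add_delta u a y)
    then show ?case by (intro neumann.add_closed neumann.scale_closed delta_DN)
  qed
qed

lemma Ftilde_diff_summable:
  assumes "psi \<in> Ftilde b"
  shows "(\<lambda>z. complex_of_real (b y z) * (psi y - psi z)) summable_on UNIV"
proof (rule abs_summable_summable)
  have "(\<lambda>z. b y z * cmod (psi y) + cmod (complex_of_real (b y z) * psi z)) summable_on UNIV"
    using assms b_summable unfolding Ftilde_def
    by (intro summable_on_add summable_on_cmult_left) auto
  then show "(\<lambda>z. norm (complex_of_real (b y z) * (psi y - psi z))) summable_on UNIV"
  proof (rule Infinite_Sum.abs_summable_on_comparison_test')
    fix z
    have "norm (complex_of_real (b y z) * (psi y - psi z)) = b y z * cmod (psi y - psi z)"
      using b_nonneg[of y z] by (simp add: norm_mult)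
    also have "\<dots> \<le> b y z * (cmod (psi y) + cmod (psi z))"
      by (rule mult_left_mono[OF norm_triangle_ineq4 b_nonneg])
    also have "\<dots> = b y z * cmod (psi y) + cmod (complex_of_real (b y z) * psi z)"
      using b_nonneg[of y z] by (simp add: norm_mult algebra_simps)
    finally show "norm (complex_of_real (b y z) * (psi y - psi z))
        \<le> b y z * cmod (psi y) + cmod (complex_of_real (b y z) * psi z)" .
  qed
qed

lemma Ltilde_eq:
  assumes u: "u \<in> Ftilde b"
  shows "Ltilde b c m u y = (u y * complex_of_real ((\<Sum>\<^sub>\<infinity>z. b y z) + c y)
      - (\<Sum>\<^sub>\<infinity>z. complex_of_real (b y z) * u z)) / complex_of_real (m y)"
proof -
  have bu: "(\<lambda>z. complex_of_real (b y z) * u z) summable_on UNIV"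
    using u unfolding Ftilde_def by (auto intro: abs_summable_summable)
  have "(\<Sum>\<^sub>\<infinity>z. complex_of_real (b y z) * (u y - u z))
      = (\<Sum>\<^sub>\<infinity>z. u y * complex_of_real (b y z) + - (complex_of_real (b y z) * u z))"
    by (intro infsum_cong) (simp add: algebra_simps)
  also have "\<dots> = u y * complex_of_real (\<Sum>\<^sub>\<infinity>z. b y z) - (\<Sum>\<^sub>\<infinity>z. complex_of_real (b y z) * u z)"
    using bu b_summable by (subst infsum_add)
      (auto simp: infsum_uminus summable_on_uminus summable_on_cmult_right summable_on_of_real
        infsum_cmult_right' infsum_of_real_summable)
  finally show ?thesis
    unfolding Ltilde_def using m_nonzero[of y] by (simp add: field_simps)
qed

lemma QN_delta:
  assumes psi: "psi \<in> Ftilde b"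
  shows "QN b c (delta y) psi = cnj (Ltilde b c m psi y) * complex_of_real (m y)"
proof -
  define h where "h z = cnj (complex_of_real (b y z) * (psi y - psi z))" for z
  have h: "(h has_sum (\<Sum>\<^sub>\<infinity>z. h z)) UNIV"
    using Ftilde_diff_summable[OF psi, of y] unfolding h_def by (simp del: complex_cnj_mult)
  have "winner (case_prod b) (edge_diff (delta y)) (edge_diff psi)
      = (\<Sum>\<^sub>\<infinity>p. (if fst p = y then h (snd p) else 0) + (if snd p = y then h (fst p) else 0))"
    unfolding winner_def
  proof (rule infsum_cong)
    fix p :: "'v \<times> 'v"
    show "complex_of_real (case_prod b p) * edge_diff (delta y) p * cnj (edge_diff psi p)
        = (if fst p = y then h (snd p) else 0) + (if snd p = y then h (fst p) else 0)"
      by (cases p) (auto simp: h_def edge_diff_def delta_def b_diag b_sym[of _ y] algebra_simps)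
  qed
  also have "\<dots> = 2 * (\<Sum>\<^sub>\<infinity>z. h z)"
    using has_sum_add[OF has_sum_row[OF h] has_sum_col[OF h]] by (simp add: infsumI)
  finally have edges: "winner (case_prod b) (edge_diff (delta y)) (edge_diff psi) = 2 * (\<Sum>\<^sub>\<infinity>z. h z)" .
  have vertex: "winner c (delta y) psi = complex_of_real (c y) * cnj (psi y)"
    unfolding winner_def by (subst infsum_single_point[of y]) (auto simp: delta_def)
  have "cnj (\<Sum>\<^sub>\<infinity>z. complex_of_real (b y z) * (psi y - psi z)) = (\<Sum>\<^sub>\<infinity>z. h z)"
    unfolding h_def infsum_cnj[symmetric] ..
  then show ?thesis
    unfolding QN_eq_winner edges vertex Ltilde_def using m_nonzero[of y]
    by (simp add: field_simps)
qed

lemma DQD_iff: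
  "v \<in> DQD b c m \<longleftrightarrow> v \<in> DN b c m \<and>
     (\<exists>phi. (\<forall>n. phi n \<in> Cc) \<and> (\<lambda>n. neumann.norm2 (\<lambda>x. phi n x - v x)) \<longlonglongrightarrow> 0)"
proof -
  have "(\<lambda>n. qnorm m (QN b c) (\<lambda>x. phi n x - v x)) \<longlonglongrightarrow> 0
      \<longleftrightarrow> (\<lambda>n. neumann.norm2 (\<lambda>x. phi n x - v x)) \<longlonglongrightarrow> 0"
    if "v \<in> DN b c m" "\<And>n. phi n \<in> Cc" for phi
    unfolding qnorm_def qip_def[symmetric] using that Cc_subset_DN
    by (intro tendsto_sqrt_zero_iff neumann.nonneg neumann.diff_closed) auto
  then show ?thesis unfolding DQD_def by blast
qed

lemma Cc_subset_DQD: "Cc \<subseteq> DQD b c m"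
proof
  fix u :: "'v \<Rightarrow> complex" assume "u \<in> Cc"
  moreover have "neumann.norm2 (\<lambda>x. u x - u x) = 0"
    by (simp add: qip_def QN_def ip_def case_prod_unfold)
  ultimately show "u \<in> DQD b c m"
    unfolding DQD_iff using Cc_subset_DN by (auto intro!: exI[of _ "\<lambda>n. u"])
qed

lemma neumann_tendsto_pointwise:
  assumes "\<And>n. s n \<in> DN b c m" "w \<in> DN b c m"
    and "(\<lambda>n. neumann.norm2 (\<lambda>x. s n x - w x)) \<longlonglongrightarrow> 0"
  shows "(\<lambda>n. s n x) \<longlonglongrightarrow> w x"
proof (rule tendsto_of_weighted_sq_bound[OF _ _ assms(3)])
  fix n
  have "(\<lambda>x. s n x - w x) \<in> DN b c m" using assms by (intro neumann.diff_closed)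
  then show "(cmod (s n x - w x))\<^sup>2 * m x \<le> neumann.norm2 (\<lambda>x. s n x - w x)"
    by (intro qip_point_bound m_nonneg QN_nonneg) (simp add: DN_iff)
qed (use m_pos in blast)

text \<open>Fatou's lemma is applied to the three parts of the energy separately, hence the
  factor 3.\<close>
lemma neumann_norm2_pointwise_limit_le:
  assumes lim: "\<And>x. (\<lambda>k. p k x) \<longlonglongrightarrow> P x"
    and bound: "\<And>k. k \<ge> N \<Longrightarrow> p k \<in> DN b c m \<and> neumann.norm2 (p k) \<le> e"
  shows "P \<in> DN b c m \<and> neumann.norm2 P \<le> 3 * e"
proof -
  have parts: "p k \<in> wl2 m \<and> wnorm2 m (p k) \<le> e" "p k \<in> wl2 c \<and> wnorm2 c (p k) \<le> e"
    "edge_diff (p k) \<in> wl2 (case_prod b) \<and> wnorm2 (case_prod b) (edge_diff (p k)) \<le> 2 * e"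
    if "k \<ge> N" for k
  proof -
    have "p k \<in> DN b c m" and le: "neumann.norm2 (p k) \<le> e" using bound[OF that] by auto
    then show "p k \<in> wl2 m \<and> wnorm2 m (p k) \<le> e" "p k \<in> wl2 c \<and> wnorm2 c (p k) \<le> e"
      "edge_diff (p k) \<in> wl2 (case_prod b) \<and> wnorm2 (case_prod b) (edge_diff (p k)) \<le> 2 * e"
      using neumann_norm2[of "p k"] wnorm2_nonneg[of m, OF m_nonneg, of "p k"]
        wnorm2_nonneg[of c, OF c_nonneg, of "p k"]
        wnorm2_nonneg[of "case_prod b", OF b_pair_nonneg, of "edge_diff (p k)"]
      unfolding DN_iff by auto
  qed
  have edge_lim: "(\<lambda>k. edge_diff (p k) q) \<longlonglongrightarrow> edge_diff P q" for q
    unfolding edge_diff_def case_prod_unfold by (intro tendsto_diff lim)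
  have "P \<in> wl2 m \<and> wnorm2 m P \<le> e" "P \<in> wl2 c \<and> wnorm2 c P \<le> e"
    "edge_diff P \<in> wl2 (case_prod b) \<and> wnorm2 (case_prod b) (edge_diff P) \<le> 2 * e"
    using wnorm2_pointwise_limit_le[of m p P N e, OF m_nonneg lim parts(1)]
      wnorm2_pointwise_limit_le[of c p P N e, OF c_nonneg lim parts(2)]
      wnorm2_pointwise_limit_le[of "case_prod b" "\<lambda>k. edge_diff (p k)" "edge_diff P" N "2 * e",
        OF b_pair_nonneg edge_lim parts(3)]
    by blast+
  moreover from this have "P \<in> DN b c m" unfolding DN_iff by blast
  ultimately show ?thesis using neumann_norm2 by simp
qed

lemma neumann_cauchy_pointwise_limit:
  assumes phi: "\<And>n. phi n \<in> DN b c m"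
    and cauchy: "\<And>e. 0 < e \<Longrightarrow> \<exists>N. \<forall>n\<ge>N. \<forall>k\<ge>N. neumann.norm2 (\<lambda>x. phi n x - phi k x) < e"
    and lim: "\<And>x. (\<lambda>n. phi n x) \<longlonglongrightarrow> w x" and e: "0 < e"
  shows "\<exists>N. \<forall>n\<ge>N. (\<lambda>x. phi n x - w x) \<in> DN b c m \<and> neumann.norm2 (\<lambda>x. phi n x - w x) \<le> 3 * e"
proof -
  obtain N where N: "\<And>n k. n \<ge> N \<Longrightarrow> k \<ge> N \<Longrightarrow> neumann.norm2 (\<lambda>x. phi n x - phi k x) < e"
    using cauchy[OF e] by blast
  have "(\<lambda>x. phi n x - w x) \<in> DN b c m \<and> neumann.norm2 (\<lambda>x. phi n x - w x) \<le> 3 * e"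
    if "n \<ge> N" for n
  proof (rule neumann_norm2_pointwise_limit_le[where N = N])
    show "(\<lambda>k. phi n x - phi k x) \<longlonglongrightarrow> phi n x - w x" for x
      by (intro tendsto_diff tendsto_const lim)
    show "(\<lambda>x. phi n x - phi k x) \<in> DN b c m \<and> neumann.norm2 (\<lambda>x. phi n x - phi k x) \<le> e"
      if "k \<ge> N" for k
      using N[OF \<open>n \<ge> N\<close> that] phi by (auto intro: neumann.diff_closed less_imp_le)
  qed
  then show ?thesis by blast
qed

lemma DQD_of_cauchy:
  assumes phi: "\<And>n. phi n \<in> Cc"
    and cauchy: "\<And>e. 0 < e \<Longrightarrow> \<exists>N. \<forall>n\<ge>N. \<forall>k\<ge>N. neumann.norm2 (\<lambda>x. phi n x - phi k x) < e"
    and lim: "\<And>x. (\<lambda>n. phi n x) \<longlonglongrightarrow> w x"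
  shows "w \<in> DQD b c m"
proof -
  have phi_DN: "phi n \<in> DN b c m" for n using phi by (simp add: subsetD[OF Cc_subset_DN])
  note near = neumann_cauchy_pointwise_limit[OF phi_DN cauchy lim]
  obtain N where "(\<lambda>x. phi N x - w x) \<in> DN b c m"
    using near[of 1] by auto
  from neumann.diff_closed[OF phi_DN[of N] this]
  have w: "w \<in> DN b c m" by simp
  have "(\<lambda>n. neumann.norm2 (\<lambda>x. phi n x - w x)) \<longlonglongrightarrow> 0"
  proof (rule LIMSEQ_I)
    fix r :: real assume "0 < r"
    then obtain N where N: "\<And>n. n \<ge> N \<Longrightarrow> (\<lambda>x. phi n x - w x) \<in> DN b c m
        \<and> neumann.norm2 (\<lambda>x. phi n x - w x) \<le> 3 * (r / 6)"
      using near[of "r / 6"] by auto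
    have "norm (neumann.norm2 (\<lambda>x. phi n x - w x) - 0) < r" if "n \<ge> N" for n
      using N[OF that] neumann.nonneg[of "\<lambda>x. phi n x - w x"] \<open>0 < r\<close> by simp
    then show "\<exists>N. \<forall>n\<ge>N. norm (neumann.norm2 (\<lambda>x. phi n x - w x) - 0) < r" by blast
  qed
  then show ?thesis unfolding DQD_iff using w phi by blast
qed

end

section \<open>Forms satisfying condition (C)\<close>

locale graph_form = weighted_graph b c m
  for b :: "'v \<Rightarrow> 'v \<Rightarrow> real" and c :: "'v \<Rightarrow> real" and m :: "'v \<Rightarrow> real" +
  fixes D :: "('v \<Rightarrow> complex) set"
    and Q :: "('v \<Rightarrow> complex) \<Rightarrow> ('v \<Rightarrow> complex) \<Rightarrow> complex"
  assumes condC: "condC b c m D Q"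
begin

lemma sym_form: "is_sym_form m D Q"
  using condC unfolding condC_def by blast

lemma Cc_subset_D: "Cc \<subseteq> D"
  using condC unfolding condC_def by blast

lemma D_wl2: "u \<in> D \<Longrightarrow> u \<in> wl2 m"
  using sym_form unfolding is_sym_form_def l2_def wl2_def by (auto simp: mult.commute)

lemma Q_eq_Ltilde_pairing:
  assumes "u \<in> D" "v \<in> Cc"
  shows "(\<lambda>x. cmod (u x * cnj (Ltilde b c m v x) * complex_of_real (m x))) summable_on UNIV"
    and "Q u v = (\<Sum>\<^sub>\<infinity>x. u x * cnj (Ltilde b c m v x) * complex_of_real (m x))"
  using condC assms unfolding condC_def by auto

lemma D_add: "u \<in> D \<Longrightarrow> v \<in> D \<Longrightarrow> (\<lambda>x. u x + v x) \<in> D"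
  using sym_form unfolding is_sym_form_def by blast

lemma D_scale: "u \<in> D \<Longrightarrow> (\<lambda>x. a * u x) \<in> D"
  using sym_form unfolding is_sym_form_def by blast

lemma Q_add: "u \<in> D \<Longrightarrow> v \<in> D \<Longrightarrow> w \<in> D \<Longrightarrow> Q (\<lambda>x. u x + v x) w = Q u w + Q v w"
  using sym_form unfolding is_sym_form_def by blast

lemma Q_scale: "u \<in> D \<Longrightarrow> w \<in> D \<Longrightarrow> Q (\<lambda>x. a * u x) w = a * Q u w"
  using sym_form unfolding is_sym_form_def by blast

lemma Q_herm: "u \<in> D \<Longrightarrow> v \<in> D \<Longrightarrow> Q u v = cnj (Q v u)"
  using sym_form unfolding is_sym_form_def by blast

lemma Q_nonneg: "u \<in> D \<Longrightarrow> 0 \<le> Re (Q u u)"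
  using condC unfolding condC_def nonneg_form_def by blast

lemma pos_herm_form_qip: "pos_herm_form D (qip m Q)"
proof
  fix u v w a assume u: "u \<in> D" and v: "v \<in> D" and w: "w \<in> D"
  note wl2 = D_wl2[OF u] D_wl2[OF v] D_wl2[OF w]
  show "(\<lambda>x. u x + v x) \<in> D" "(\<lambda>x. a * u x) \<in> D"
    using u v by (simp_all add: D_add D_scale)
  show "qip m Q (\<lambda>x. u x + v x) w = qip m Q u w + qip m Q v w"
    unfolding qip_def ip_eq_winner Q_add[OF u v w] winner_add[OF m_nonneg wl2] by simp
  show "qip m Q (\<lambda>x. a * u x) w = a * qip m Q u w"
    unfolding qip_def ip_eq_winner Q_scale[OF u w] winner_scale by (simp add: distrib_left)
  show "qip m Q u v = cnj (qip m Q v u)"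
    unfolding qip_def ip_eq_winner Q_herm[OF u v] winner_cnj[of m u v] by simp
  show "0 \<le> Re (qip m Q u u)"
    using Q_nonneg[OF u] wnorm2_nonneg[of m u, OF m_nonneg]
    unfolding qip_def ip_eq_winner winner_self[OF m_nonneg wl2(1)] by simp
qed

sublocale form: complete_pos_herm_form D "qip m Q"
proof (intro complete_pos_herm_form.intro pos_herm_form_qip complete_pos_herm_form_axioms.intro)
  interpret pos_herm_form D "qip m Q" by (rule pos_herm_form_qip)
  fix s :: "nat \<Rightarrow> 'v \<Rightarrow> complex"
  assume s: "\<And>n. s n \<in> D"
    and cauchy: "\<And>e. 0 < e \<Longrightarrow> \<exists>N. \<forall>n\<ge>N. \<forall>k\<ge>N. Re (qip m Q (\<lambda>x. s n x - s k x) (\<lambda>x. s n x - s k x)) < e"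
  have "\<exists>N. \<forall>n\<ge>N. \<forall>k\<ge>N. qnorm m Q (\<lambda>x. s n x - s k x) < e" if "0 < e" for e
  proof -
    have "0 < e\<^sup>2" using that by simp
    then obtain N where "\<forall>n\<ge>N. \<forall>k\<ge>N. Re (qip m Q (\<lambda>x. s n x - s k x) (\<lambda>x. s n x - s k x)) < e\<^sup>2"
      using cauchy by blast
    moreover have "sqrt (e\<^sup>2) = e" using that by simp
    ultimately show ?thesis
      unfolding qnorm_def qip_def[symmetric] by (metis real_sqrt_less_mono)
  qed
  then obtain u where u: "u \<in> D" and "(\<lambda>n. qnorm m Q (\<lambda>x. s n x - u x)) \<longlonglongrightarrow> 0"
    using condC s unfolding condC_def closed_form_def by blast
  then have "(\<lambda>n. Re (qip m Q (\<lambda>x. s n x - u x) (\<lambda>x. s n x - u x))) \<longlonglongrightarrow> 0"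
    unfolding qnorm_def qip_def[symmetric]
    by (subst (asm) tendsto_sqrt_zero_iff) (use s u in \<open>auto intro: nonneg diff_closed\<close>)
  with u show "\<exists>u\<in>D. (\<lambda>n. Re (qip m Q (\<lambda>x. s n x - u x) (\<lambda>x. s n x - u x))) \<longlonglongrightarrow> 0"
    by blast
qed

lemma Ltilde_delta:
  "Ltilde b c m (delta y) x = complex_of_real
     (if x = y then ((\<Sum>\<^sub>\<infinity>z. b y z) + c y) / m y else - b x y / m x)"
proof (cases "x = y")
  case True
  have "(\<Sum>\<^sub>\<infinity>z. complex_of_real (b x z) * (delta y x - delta y z))
      = (\<Sum>\<^sub>\<infinity>z. complex_of_real (b y z))"
    using True by (intro infsum_cong) (auto simp: delta_def b_diag)
  also have "\<dots> = complex_of_real (\<Sum>\<^sub>\<infinity>z. b y z)"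
    by (rule infsum_of_real_summable[OF b_summable])
  finally show ?thesis
    unfolding Ltilde_def using True by (simp add: delta_def add_divide_distrib)
next
  case False
  have "(\<Sum>\<^sub>\<infinity>z. complex_of_real (b x z) * (delta y x - delta y z)) = - complex_of_real (b x y)"
    using False by (subst infsum_single_point[of y]) (auto simp: delta_def)
  then show ?thesis
    unfolding Ltilde_def using False by (simp add: delta_def)
qed

lemma D_subset_Ftilde: "D \<subseteq> Ftilde b"
proof
  fix u assume u: "u \<in> D"
  have "(\<lambda>y. cmod (complex_of_real (b x y) * u y)) summable_on UNIV" for x
  proof (rule summable_on_comparison_test)
    show "(\<lambda>z. cmod (u z * cnj (Ltilde b c m (delta x) z) * complex_of_real (m z))) summable_on UNIV"
      using Q_eq_Ltilde_pairing(1)[OF u delta_Cc] .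
    show "cmod (complex_of_real (b x z) * u z)
        \<le> cmod (u z * cnj (Ltilde b c m (delta x) z) * complex_of_real (m z))" for z
      using m_nonzero[of z] b_nonneg[of z x]
      by (cases "z = x") (auto simp: Ltilde_delta b_diag b_sym[of x z] norm_mult norm_divide)
  qed simp
  then show "u \<in> Ftilde b" unfolding Ftilde_def by blast
qed

lemma Q_delta_right:
  assumes u: "u \<in> D"
  shows "Q u (delta y)
    = u y * complex_of_real ((\<Sum>\<^sub>\<infinity>z. b y z) + c y) - (\<Sum>\<^sub>\<infinity>z. complex_of_real (b y z) * u z)"
proof -
  have bu: "(\<lambda>z. complex_of_real (b y z) * u z) summable_on UNIV"
    using D_subset_Ftilde u unfolding Ftilde_def by (auto intro: abs_summable_summable)
  have "Q u (delta y) = (\<Sum>\<^sub>\<infinity>x. u x * cnj (Ltilde b c m (delta y) x) * complex_of_real (m x))"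
    using Q_eq_Ltilde_pairing(2)[OF u delta_Cc] .
  also have "\<dots> = (\<Sum>\<^sub>\<infinity>x. - (complex_of_real (b y x) * u x)
      + (if x = y then u y * complex_of_real ((\<Sum>\<^sub>\<infinity>z. b y z) + c y) else 0))"
    using m_nonzero by (intro infsum_cong) (auto simp: Ltilde_delta b_diag b_sym[of _ y])
  also have "\<dots> = u y * complex_of_real ((\<Sum>\<^sub>\<infinity>z. b y z) + c y)
      - (\<Sum>\<^sub>\<infinity>x. complex_of_real (b y x) * u x)"
    using bu by (subst infsum_add)
      (auto simp: infsum_uminus summable_on_uminus infsum_single_point[of y]
        intro: finite_nonzero_values_imp_summable_on)
  finally show ?thesis .
qed

lemma qip_delta:
  assumes u: "u \<in> D"
  shows "qip m Q u (delta y) = (Ltilde b c m u y + u y) * complex_of_real (m y)"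
proof -
  have "ip m u (delta y) = u y * complex_of_real (m y)"
    unfolding ip_def by (subst infsum_single_point[of y]) (auto simp: delta_def)
  then show ?thesis
    unfolding qip_def Q_delta_right[OF u] Ltilde_eq[OF subsetD[OF D_subset_Ftilde u]]
    using m_nonzero[of y] by (simp add: field_simps)
qed

lemma Q_delta_left:
  assumes "psi \<in> Cc"
  shows "Q (delta y) psi = cnj (Ltilde b c m psi y) * complex_of_real (m y)"
  unfolding Q_eq_Ltilde_pairing(2)[OF subsetD[OF Cc_subset_D delta_Cc] assms]
  by (subst infsum_single_point[of y]) (auto simp: delta_def)

lemma qip_eq_neumann_Cc:
  assumes phi: "phi \<in> Cc" and psi: "psi \<in> Cc"
  shows "qip m Q phi psi = qip m (QN b c) phi psi"
  using phi
proof (induction rule: Cc_induct)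
  case zero
  have "psi \<in> D" "psi \<in> DN b c m" using psi Cc_subset_D Cc_subset_DN by auto
  then show ?case using form.zero_left neumann.zero_left by simp
next
  case (add_delta u a y)
  have D: "u \<in> D" "delta y \<in> D" "psi \<in> D"
    using add_delta.hyps psi delta_Cc[of y] by (simp_all add: subsetD[OF Cc_subset_D])
  have DN: "u \<in> DN b c m" "delta y \<in> DN b c m" "psi \<in> DN b c m"
    using add_delta.hyps psi delta_Cc[of y] by (simp_all add: subsetD[OF Cc_subset_DN])
  have "psi \<in> Ftilde b" using psi Cc_subset_Ftilde by blast
  then have "Q (delta y) psi = QN b c (delta y) psi"
    by (simp only: Q_delta_left[OF psi] QN_delta)
  then have "qip m Q (delta y) psi = qip m (QN b c) (delta y) psi"
    unfolding qip_def by simp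
  then show ?case
    unfolding form.add_left[OF D(1) D_scale[OF D(2)] D(3)]
      neumann.add_left[OF DN(1) neumann.scale_closed[OF DN(2)] DN(3)]
      form.scale_left[OF D(2,3)] neumann.scale_left[OF DN(2,3)] add_delta.IH
    by simp
qed

lemma form_tendsto_pointwise:
  assumes "\<And>n. s n \<in> D" "w \<in> D" "(\<lambda>n. form.norm2 (\<lambda>x. s n x - w x)) \<longlonglongrightarrow> 0"
  shows "(\<lambda>n. s n x) \<longlonglongrightarrow> w x"
proof (rule tendsto_of_weighted_sq_bound[OF _ _ assms(3)])
  fix n
  have "(\<lambda>x. s n x - w x) \<in> D" using assms by (intro form.diff_closed)
  then show "(cmod (s n x - w x))\<^sup>2 * m x \<le> form.norm2 (\<lambda>x. s n x - w x)"
    by (intro qip_point_bound m_nonneg Q_nonneg D_wl2)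
qed (use m_pos in blast)

lemma form_norm2_Cc: "phi \<in> Cc \<Longrightarrow> form.norm2 phi = neumann.norm2 phi"
  by (simp add: qip_eq_neumann_Cc)

lemma DQD_approx:
  assumes "v \<in> DQD b c m"
  shows "v \<in> D \<and> (\<exists>phi. (\<forall>n. phi n \<in> Cc) \<and> (\<lambda>n. form.norm2 (\<lambda>x. phi n x - v x)) \<longlonglongrightarrow> 0)"
proof -
  obtain phi where v: "v \<in> DN b c m" and phi: "\<And>n. phi n \<in> Cc"
    and lim: "(\<lambda>n. neumann.norm2 (\<lambda>x. phi n x - v x)) \<longlonglongrightarrow> 0"
    using assms unfolding DQD_iff by blast
  have phi_DN: "phi n \<in> DN b c m" and phi_D: "phi n \<in> D" for n
    using phi by (simp_all add: subsetD[OF Cc_subset_DN] subsetD[OF Cc_subset_D])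
  have "\<exists>N. \<forall>n\<ge>N. \<forall>k\<ge>N. form.norm2 (\<lambda>x. phi n x - phi k x) < e" if "0 < e" for e
    using neumann.cauchy_of_tendsto[OF phi_DN v lim that]
    by (simp add: form_norm2_Cc fun_subspace_diff[OF fun_subspace_Cc phi phi])
  from form.complete[OF phi_D this]
  obtain w where w: "w \<in> D" and lim_w: "(\<lambda>n. form.norm2 (\<lambda>x. phi n x - w x)) \<longlonglongrightarrow> 0"
    by blast
  have "w = v"
  proof
    fix x
    show "w x = v x"
      using form_tendsto_pointwise[OF phi_D w lim_w] neumann_tendsto_pointwise[OF phi_DN v lim]
      by (rule LIMSEQ_unique)
  qed
  with phi w lim_w show ?thesis by blast
qed

lemma DQD_subset_D: "DQD b c m \<subseteq> D"
  using DQD_approx by blast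

lemma harmonic_iff_orthogonal_Cc:
  assumes u: "u \<in> D"
  shows "(\<forall>x. Ltilde b c m u x + u x = 0) \<longleftrightarrow> (\<forall>phi\<in>Cc. qip m Q u phi = 0)"
proof
  assume "\<forall>phi\<in>Cc. qip m Q u phi = 0"
  then show "\<forall>x. Ltilde b c m u x + u x = 0"
    using qip_delta[OF u] delta_Cc m_nonzero by fastforce
next
  assume harmonic: "\<forall>x. Ltilde b c m u x + u x = 0"
  show "\<forall>phi\<in>Cc. qip m Q u phi = 0"
  proof
    fix phi :: "'v \<Rightarrow> complex" assume "phi \<in> Cc"
    then show "qip m Q u phi = 0"
    proof (induction rule: Cc_induct)
      case zero
      show ?case using form.zero_left[OF u] form.hermitian[OF u, of "\<lambda>x. 0"]
        D_scale[OF u, of 0] by simp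
    next
      case (add_delta phi a y)
      have "phi \<in> D" "delta y \<in> D" "(\<lambda>x. a * delta y x) \<in> D"
        using add_delta.hyps delta_Cc[of y] by (simp_all add: subsetD[OF Cc_subset_D] D_scale)
      then show ?case
        using add_delta.IH harmonic qip_delta[OF u, of y]
        by (simp add: form.add_right[OF u] form.scale_right[OF u])
    qed
  qed
qed

lemma harmonic_iff_orthogonal_DQD:
  assumes u: "u \<in> D"
  shows "(\<forall>x. Ltilde b c m u x + u x = 0) \<longleftrightarrow> (\<forall>v\<in>DQD b c m. qip m Q u v = 0)"
proof
  assume "\<forall>v\<in>DQD b c m. qip m Q u v = 0"
  then have "\<forall>phi\<in>Cc. qip m Q u phi = 0"
    by (simp add: subsetD[OF Cc_subset_DQD])
  then show "\<forall>x. Ltilde b c m u x + u x = 0"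
    using harmonic_iff_orthogonal_Cc[OF u] by blast
next
  assume "\<forall>x. Ltilde b c m u x + u x = 0"
  then have orth: "\<forall>phi\<in>Cc. qip m Q u phi = 0"
    using harmonic_iff_orthogonal_Cc[OF u] by blast
  show "\<forall>v\<in>DQD b c m. qip m Q u v = 0"
  proof
    fix v assume "v \<in> DQD b c m"
    then obtain phi where phi: "\<And>n. phi n \<in> Cc" and "v \<in> D"
      and lim: "(\<lambda>n. form.norm2 (\<lambda>x. phi n x - v x)) \<longlonglongrightarrow> 0"
      using DQD_approx by blast
    have "phi n \<in> D" for n using phi by (simp add: subsetD[OF Cc_subset_D])
    then show "qip m Q u v = 0"
      using orth phi by (intro form.orthogonal_tendsto[OF u _ \<open>v \<in> D\<close> _ lim]) simp_all
  qed
qed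

lemma DQD_orthogonal_Hsp:
  assumes v: "v \<in> DQD b c m" and h: "h \<in> Hsp b c m D"
  shows "qip m Q v h = 0"
proof -
  have "h \<in> D" and harmonic: "\<forall>x. Ltilde b c m h x + h x = 0" using h by (simp_all add: Hsp_def)
  moreover have "v \<in> D" using v by (simp add: subsetD[OF DQD_subset_D])
  ultimately have "qip m Q h v = 0"
    using harmonic_iff_orthogonal_DQD v by blast
  then show ?thesis by (simp add: form.hermitian[OF \<open>v \<in> D\<close> \<open>h \<in> D\<close>])
qed

lemma decomposition:
  assumes u: "u \<in> D"
  shows "\<exists>v\<in>DQD b c m. \<exists>h\<in>Hsp b c m D. u = (\<lambda>x. v x + h x)"
proof -
  obtain phi w where phi: "\<And>n. phi n \<in> Cc" and w: "w \<in> D"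
    and lim: "(\<lambda>n. form.norm2 (\<lambda>x. phi n x - w x)) \<longlonglongrightarrow> 0"
    and orth: "\<And>c. c \<in> Cc \<Longrightarrow> qip m Q (\<lambda>x. u x - w x) c = 0"
    using form.projection[OF fun_subspace_Cc Cc_subset_D u] by blast
  have phi_D: "phi n \<in> D" for n using phi by (simp add: subsetD[OF Cc_subset_D])
  have "w \<in> DQD b c m"
  proof (rule DQD_of_cauchy[OF phi])
    show "\<exists>N. \<forall>n\<ge>N. \<forall>k\<ge>N. neumann.norm2 (\<lambda>x. phi n x - phi k x) < e" if "0 < e" for e
      using form.cauchy_of_tendsto[OF phi_D w lim that]
      by (simp add: form_norm2_Cc fun_subspace_diff[OF fun_subspace_Cc phi phi])
    show "(\<lambda>n. phi n x) \<longlonglongrightarrow> w x" for x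
      by (rule form_tendsto_pointwise[OF phi_D w lim])
  qed
  moreover have "(\<lambda>x. u x - w x) \<in> Hsp b c m D"
    using harmonic_iff_orthogonal_Cc[OF form.diff_closed[OF u w]] orth form.diff_closed[OF u w]
    unfolding Hsp_def by blast
  ultimately show ?thesis by (intro bexI[of _ w] bexI[of _ "\<lambda>x. u x - w x"]) auto
qed

end

theorem mainTheorem3:
  fixes m :: "'v::countable \<Rightarrow> real"
    and b :: "'v \<Rightarrow> 'v \<Rightarrow> real" and c :: "'v \<Rightarrow> real"
    and D :: "('v \<Rightarrow> complex) set"
    and Q :: "('v \<Rightarrow> complex) \<Rightarrow> ('v \<Rightarrow> complex) \<Rightarrow> complex"
  assumes "\<forall>x. m x > 0"
    and "is_graph b c"
    and "condC b c m D Q"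
  shows "D \<subseteq> Ftilde b
     \<and> (\<forall>u\<in>D. (\<forall>x. Ltilde b c m u x + u x = 0) \<longleftrightarrow> (\<forall>v\<in>DQD b c m. qip m Q u v = 0))
     \<and> DQD b c m \<subseteq> D \<and> Hsp b c m D \<subseteq> D
     \<and> (\<forall>v\<in>DQD b c m. \<forall>h\<in>Hsp b c m D. qip m Q v h = 0)
     \<and> (\<forall>u\<in>D. \<exists>v\<in>DQD b c m. \<exists>h\<in>Hsp b c m D. u = (\<lambda>x. v x + h x))"
proof -
  interpret graph_form b c m D Q
    using assms by unfold_locales auto
  show ?thesis
    using D_subset_Ftilde harmonic_iff_orthogonal_DQD DQD_subset_D DQD_orthogonal_Hsp decomposition
    by (auto simp: Hsp_def)
qed

end
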